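(* Let $A=(a_{ij})$ be a real $n\times n$ matrix with nonnegative entries, $\mathbf 1=(1,\ldots,1)^{\mathrm T}\in\mathbb R^n$, and $L=\operatorname{diag}(A\mathbf 1)-A$. Let $\Gamma$ be the digraph on vertex set $\{1,\ldots,n\}$ containing the arc $(i,j)$, $i\neq j$, whenever $a_{ij}>0$. Let $U$ be any matrix obtained from $L$ by (1) deleting, for each final class of $\Gamma$, the column of $L$ corresponding to one (arbitrarily chosen) vertex of that final class, and (2) adding $\mathbf 1$ as the first column. Then the orthogonal projection $S$ of $\mathbb R^n$ onto the subspace $\mathcal R(L)\oplus\operatorname{span}(\mathbf 1)$ is given by $S=U(U^{\mathrm T}U)^{-1}U^{\mathrm T}$.
   Context: $\mathcal R(L)$ denotes the range (column space) of $L$. The $k$-th column of $L$ is said to correspond to vertex $k$. A final class of $\Gamma$ is the vertex set of a strongly connected component (bicomponent) of $\Gamma$ from which there is no arc directed to a vertex outside it. *)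

theory Defs
  imports "Jordan_Normal_Form.Matrix"
begin

definition arc :: "nat \<Rightarrow> real mat \<Rightarrow> nat \<Rightarrow> nat \<Rightarrow> bool" where
  "arc n A i j \<longleftrightarrow> i < n \<and> j < n \<and> i \<noteq> j \<and> A $$ (i, j) > 0"

definition reach :: "nat \<Rightarrow> real mat \<Rightarrow> nat \<Rightarrow> nat \<Rightarrow> bool" where
  "reach n A i j \<longleftrightarrow> i < n \<and> (arc n A)\<^sup>*\<^sup>* i j"

definition bicomponent :: "nat \<Rightarrow> real mat \<Rightarrow> nat \<Rightarrow> nat set" where
  "bicomponent n A i = {j. reach n A i j \<and> reach n A j i}"

definition final_class :: "nat \<Rightarrow> real mat \<Rightarrow> nat set \<Rightarrow> bool" where
  "final_class n A C \<longleftrightarrow> (\<exists>i<n. C = bicomponent n A i) \<and>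
     (\<forall>i\<in>C. \<forall>j. arc n A i j \<longrightarrow> j \<in> C)"

definition laplacian :: "nat \<Rightarrow> real mat \<Rightarrow> real mat" where
  "laplacian n A = mat n n (\<lambda>(i, j). (if i = j then (\<Sum>k<n. A $$ (i, k)) else 0) - A $$ (i, j))"

definition ones_vec :: "nat \<Rightarrow> real vec" where
  "ones_vec n = vec n (\<lambda>_. 1)"

definition final_class_representatives :: "nat \<Rightarrow> real mat \<Rightarrow> nat set \<Rightarrow> bool" where
  "final_class_representatives n A D \<longleftrightarrow>
     (\<forall>d\<in>D. \<exists>C. final_class n A C \<and> d \<in> C) \<and>
     (\<forall>C. final_class n A C \<longrightarrow> card (D \<inter> C) = 1)"

definition U_mat :: "nat \<Rightarrow> real mat \<Rightarrow> nat set \<Rightarrow> real mat" where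
  "U_mat n A D = (let ks = sorted_list_of_set ({0..<n} - D) in
     mat n (Suc (length ks)) (\<lambda>(i, j). if j = 0 then 1 else laplacian n A $$ (i, ks ! (j - 1))))"

definition range_plus_ones :: "nat \<Rightarrow> real mat \<Rightarrow> real vec set" where
  "range_plus_ones n A = {laplacian n A *\<^sub>v x + c \<cdot>\<^sub>v ones_vec n | x c. x \<in> carrier_vec n}"

definition orth_proj_onto :: "nat \<Rightarrow> real vec set \<Rightarrow> real mat \<Rightarrow> bool" where
  "orth_proj_onto n W P \<longleftrightarrow> P \<in> carrier_mat n n \<and>
     (\<forall>x\<in>carrier_vec n. P *\<^sub>v x \<in> W \<and> (\<forall>w\<in>W. (x - P *\<^sub>v x) \<bullet> w = 0))"

end

theory Submission
  imports Defs "Jordan_Normal_Form.Determinant"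
begin

text \<open>
  Write \<open>(L x)\<^sub>i = \<Sum>\<^sub>j a\<^sub>i\<^sub>j (x\<^sub>i - x\<^sub>j)\<close>. Since \<open>a\<^sub>i\<^sub>j \<ge> 0\<close>, a vector with \<open>(L x)\<^sub>i = 0\<close> that attains its
  maximum at \<open>i\<close> attains it at every out-neighbour of \<open>i\<close>, and every vertex reaches a final class.
  This maximum principle yields: (a) if \<open>L x\<close> is constant then it is zero; (b) a vector vanishing
  on the set \<open>D\<close> of chosen representatives with \<open>(L x)\<^sub>i = 0\<close> off \<open>D\<close> is zero; (c) any such
  vector also satisfies \<open>L x = 0\<close> at the representatives. By (a) and (b) the columns of \<open>U\<close> are
  independent, so \<open>U\<^sup>T U\<close> is invertible. By (b), the Dirichlet problem with data on \<open>D\<close> is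
  uniquely solvable, and by (c) its solutions lie in the kernel of \<open>L\<close>. Hence \<open>U\<close> spans
  \<open>\<R>(L) + span(\<one>)\<close>, and \<open>U (U\<^sup>T U)\<^sup>-\<^sup>1 U\<^sup>T\<close> is the orthogonal projection onto the column space of \<open>U\<close>.
\<close>

definition laplacian_at :: "nat \<Rightarrow> real mat \<Rightarrow> (nat \<Rightarrow> real) \<Rightarrow> nat \<Rightarrow> real" where
  "laplacian_at n A x i = (\<Sum>j<n. A $$ (i, j) * (x i - x j))"

lemma laplacian_carrier [simp]: "laplacian n A \<in> carrier_mat n n"
  unfolding laplacian_def by simp

lemma ones_vec_carrier [simp]: "ones_vec n \<in> carrier_vec n"
  unfolding ones_vec_def by simp

lemma laplacian_mult_vec_nth:
  assumes "x \<in> carrier_vec n" "i < n"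
  shows "(laplacian n A *\<^sub>v x) $ i = laplacian_at n A (\<lambda>j. x $ j) i"
proof -
  have "(laplacian n A *\<^sub>v x) $ i =
      (\<Sum>j<n. ((if i = j then (\<Sum>k<n. A $$ (i, k)) else 0) - A $$ (i, j)) * x $ j)"
    using assms unfolding laplacian_def
    by (auto simp: scalar_prod_def lessThan_atLeast0 intro!: sum.cong)
  also have "\<dots> = (\<Sum>j<n. if i = j then (\<Sum>k<n. A $$ (i, k)) * x $ j else 0)
      - (\<Sum>j<n. A $$ (i, j) * x $ j)"
    by (subst sum_subtractf[symmetric]) (rule sum.cong, auto simp: algebra_simps)
  also have "\<dots> = (\<Sum>k<n. A $$ (i, k)) * x $ i - (\<Sum>j<n. A $$ (i, j) * x $ j)"
    using assms(2) by simp
  also have "\<dots> = laplacian_at n A (\<lambda>j. x $ j) i"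
    unfolding laplacian_at_def by (simp add: sum_distrib_right right_diff_distrib sum_subtractf)
  finally show ?thesis .
qed

lemma laplacian_at_uminus: "laplacian_at n A (\<lambda>j. - x j) i = - laplacian_at n A x i"
  unfolding laplacian_at_def by (simp add: sum_negf[symmetric] algebra_simps)

lemma laplacian_at_min_nonpos:
  assumes nonneg: "\<And>i j. i < n \<Longrightarrow> j < n \<Longrightarrow> A $$ (i, j) \<ge> 0"
    and "i < n" and "\<forall>j<n. x i \<le> x j"
  shows "laplacian_at n A x i \<le> 0"
  unfolding laplacian_at_def
  by (rule sum_nonpos) (use assms in \<open>auto intro: mult_nonneg_nonpos\<close>)

lemma laplacian_at_const_eq_zero:
  assumes nonneg: "\<And>i j. i < n \<Longrightarrow> j < n \<Longrightarrow> A $$ (i, j) \<ge> 0"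
    and "n > 0" and const: "\<And>i. i < n \<Longrightarrow> laplacian_at n A x i = c"
  shows "c = 0"
proof -
  have argmin: "\<exists>i<n. \<forall>j<n. y i \<le> y j" for y :: "nat \<Rightarrow> real"
  proof -
    have "Min (y ` {..<n}) \<in> y ` {..<n}" using \<open>n > 0\<close> by (intro Min_in) auto
    then obtain i where "i < n" "y i = Min (y ` {..<n})" by auto
    then show ?thesis by auto
  qed
  obtain i where i: "i < n" "\<forall>j<n. x i \<le> x j" using argmin by blast
  have "c \<le> 0" using laplacian_at_min_nonpos[OF nonneg i] const[OF i(1)] by simp
  obtain i' where i': "i' < n" "\<forall>j<n. - x i' \<le> - x j" using argmin[of "\<lambda>j. - x j"] by blast
  have "- c \<le> 0"
    using laplacian_at_min_nonpos[OF nonneg i'] const[OF i'(1)] by (simp add: laplacian_at_uminus)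
  show ?thesis using \<open>c \<le> 0\<close> \<open>- c \<le> 0\<close> by simp
qed

lemma arc_rtranclp_less: "(arc n A)\<^sup>*\<^sup>* i j \<Longrightarrow> i < n \<Longrightarrow> j < n"
  by (induction rule: rtranclp_induct) (auto simp: arc_def)

lemma final_class_subset: "final_class n A C \<Longrightarrow> C \<subseteq> {..<n}"
  unfolding final_class_def bicomponent_def reach_def by (auto dest: arc_rtranclp_less)

lemma final_class_representatives_subset:
  "final_class_representatives n A D \<Longrightarrow> D \<subseteq> {..<n}"
  using final_class_subset unfolding final_class_representatives_def by blast

lemma final_class_representative_unique:
  assumes "final_class_representatives n A D" "final_class n A C"
    and "d \<in> D \<inter> C" "e \<in> D \<inter> C"
  shows "e = d"
  using assms unfolding final_class_representatives_def by (metis card_1_singletonE singletonD)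

text \<open>A vertex \<open>j\<close> reachable from \<open>i\<close> whose reachable set is smallest lies in a final class.\<close>
lemma reaches_final_class_representative:
  assumes reps: "final_class_representatives n A D" and "i < n"
  shows "\<exists>d\<in>D. (arc n A)\<^sup>*\<^sup>* i d"
proof -
  define R where "R j = {m. (arc n A)\<^sup>*\<^sup>* j m}" for j
  have "R j \<subseteq> insert j {..<n}" for j
  proof
    fix m assume "m \<in> R j"
    then have "(arc n A)\<^sup>*\<^sup>* j m" unfolding R_def by simp
    then show "m \<in> insert j {..<n}"
      by (cases rule: converse_rtranclpE) (auto simp: arc_def dest: arc_rtranclp_less)
  qed
  then have finite_R: "finite (R j)" for j
    by (meson finite_insert finite_lessThan finite_subset)
  obtain j where ij: "(arc n A)\<^sup>*\<^sup>* i j"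
    and min: "\<And>m. (arc n A)\<^sup>*\<^sup>* i m \<Longrightarrow> card (R j) \<le> card (R m)"
    using ex_has_least_nat[of "\<lambda>j. (arc n A)\<^sup>*\<^sup>* i j" i "\<lambda>j. card (R j)"] by blast
  have "j < n" using arc_rtranclp_less[OF ij \<open>i < n\<close>] .
  define C where "C = bicomponent n A j"
  have "final_class n A C"
    unfolding final_class_def
  proof (intro conjI ballI allI impI)
    show "\<exists>i<n. C = bicomponent n A i" using \<open>j < n\<close> C_def by blast
  next
    fix l m assume "l \<in> C" and lm: "arc n A l m"
    then have jm: "(arc n A)\<^sup>*\<^sup>* j m"
      unfolding C_def bicomponent_def reach_def by (auto intro: rtranclp.rtrancl_into_rtrancl)
    have "R m \<subseteq> R j" using jm unfolding R_def by auto
    moreover have "card (R j) \<le> card (R m)" using ij jm min by (meson rtranclp_trans)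
    ultimately have "R m = R j" using finite_R card_seteq by blast
    then have "(arc n A)\<^sup>*\<^sup>* m j" unfolding R_def by blast
    then show "m \<in> C"
      using \<open>j < n\<close> jm arc_rtranclp_less unfolding C_def bicomponent_def reach_def by blast
  qed
  then have "card (D \<inter> C) = 1" using reps unfolding final_class_representatives_def by blast
  then obtain d where "D \<inter> C = {d}" by (rule card_1_singletonE)
  then have "d \<in> D" "(arc n A)\<^sup>*\<^sup>* j d" unfolding C_def bicomponent_def reach_def by auto
  then show ?thesis using ij by (blast intro: rtranclp_trans)
qed

lemma laplacian_at_zero_arc_eq:
  assumes nonneg: "\<And>i j. i < n \<Longrightarrow> j < n \<Longrightarrow> A $$ (i, j) \<ge> 0"
    and "i < n" and zero: "laplacian_at n A x i = 0"
    and le: "\<And>j. arc n A i j \<Longrightarrow> x j \<le> x i"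
    and ij: "arc n A i j"
  shows "x j = x i"
proof -
  have terms_nonneg: "\<forall>k\<in>{..<n}. A $$ (i, k) * (x i - x k) \<ge> 0"
  proof
    fix k assume "k \<in> {..<n}"
    then show "A $$ (i, k) * (x i - x k) \<ge> 0"
      using nonneg[of i k] le[of k] \<open>i < n\<close> by (cases "arc n A i k") (auto simp: arc_def not_less)
  qed
  have terms_zero: "\<forall>k\<in>{..<n}. A $$ (i, k) * (x i - x k) = 0"
    using zero terms_nonneg unfolding laplacian_at_def by (subst sum_nonneg_eq_0_iff[symmetric]) auto
  have "j < n" "A $$ (i, j) > 0" using ij by (auto simp: arc_def)
  then show ?thesis using terms_zero by force
qed

text \<open>Discrete maximum principle: a maximum propagates along arcs out of every vertex outside \<open>D\<close>.\<close>
lemma max_attained_at_representative: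
  assumes nonneg: "\<And>i j. i < n \<Longrightarrow> j < n \<Longrightarrow> A $$ (i, j) \<ge> 0"
    and closed: "\<And>j m. j \<in> P \<Longrightarrow> arc n A j m \<Longrightarrow> m \<in> P"
    and bound: "\<And>j. j \<in> P \<Longrightarrow> x j \<le> M"
    and harmonic: "\<And>i. i < n \<Longrightarrow> i \<notin> D \<Longrightarrow> laplacian_at n A x i = 0"
    and "i0 \<in> P" "x i0 = M"
    and "(arc n A)\<^sup>*\<^sup>* i0 d" "d \<in> D"
  shows "\<exists>e\<in>P \<inter> D. x e = M"
proof -
  have "j \<in> P \<and> (x j = M \<or> (\<exists>e\<in>P \<inter> D. x e = M))" if "(arc n A)\<^sup>*\<^sup>* i0 j" for j
    using that
  proof (induction rule: rtranclp_induct)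
    case base
    then show ?case using \<open>i0 \<in> P\<close> \<open>x i0 = M\<close> by auto
  next
    case (step j m)
    then have "m \<in> P" using closed by blast
    show ?case
    proof (cases "j \<in> D \<or> x j \<noteq> M")
      case True
      then show ?thesis using step.IH \<open>m \<in> P\<close> by auto
    next
      case False
      have "j < n" using step.hyps(2) by (simp add: arc_def)
      have "x m = x j"
        by (rule laplacian_at_zero_arc_eq[OF nonneg \<open>j < n\<close> harmonic])
           (use False \<open>j < n\<close> closed bound step in auto)
      then show ?thesis using \<open>m \<in> P\<close> False by auto
    qed
  qed
  then show ?thesis using assms(7,8) by auto
qed

lemma dirichlet_nonpos:
  assumes nonneg: "\<And>i j. i < n \<Longrightarrow> j < n \<Longrightarrow> A $$ (i, j) \<ge> 0"
    and reps: "final_class_representatives n A D"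
    and boundary: "\<And>d. d \<in> D \<Longrightarrow> x d = 0"
    and harmonic: "\<And>i. i < n \<Longrightarrow> i \<notin> D \<Longrightarrow> laplacian_at n A x i = 0"
    and "i < n"
  shows "x i \<le> 0"
proof (rule ccontr)
  assume "\<not> x i \<le> 0"
  define M where "M = Max (x ` {..<n})"
  have bound: "\<And>j. j < n \<Longrightarrow> x j \<le> M" unfolding M_def by simp
  have "M \<in> x ` {..<n}" unfolding M_def using \<open>i < n\<close> by (intro Max_in) auto
  then obtain i0 where "i0 < n" "x i0 = M" by auto
  moreover obtain d where "d \<in> D" "(arc n A)\<^sup>*\<^sup>* i0 d"
    using reaches_final_class_representative[OF reps \<open>i0 < n\<close>] by blast
  ultimately have "\<exists>e\<in>{..<n} \<inter> D. x e = M"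
    by (intro max_attained_at_representative[OF nonneg _ bound harmonic])
       (auto simp: arc_def)
  then show False using boundary bound[OF \<open>i < n\<close>] \<open>\<not> x i \<le> 0\<close> by auto
qed

lemma dirichlet_eq_zero:
  assumes nonneg: "\<And>i j. i < n \<Longrightarrow> j < n \<Longrightarrow> A $$ (i, j) \<ge> 0"
    and reps: "final_class_representatives n A D"
    and boundary: "\<And>d. d \<in> D \<Longrightarrow> x d = 0"
    and harmonic: "\<And>i. i < n \<Longrightarrow> i \<notin> D \<Longrightarrow> laplacian_at n A x i = 0"
    and "i < n"
  shows "x i = 0"
proof -
  have "x i \<le> 0" by (rule dirichlet_nonpos[OF assms])
  moreover have "- x i \<le> 0"
    by (rule dirichlet_nonpos[OF nonneg reps, of "\<lambda>j. - x j"])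
       (use assms laplacian_at_uminus in auto)
  ultimately show ?thesis by simp
qed

lemma max_of_final_class_at_representative:
  assumes nonneg: "\<And>i j. i < n \<Longrightarrow> j < n \<Longrightarrow> A $$ (i, j) \<ge> 0"
    and reps: "final_class_representatives n A D"
    and C: "final_class n A C" and "d \<in> D" "d \<in> C"
    and harmonic: "\<And>i. i < n \<Longrightarrow> i \<notin> D \<Longrightarrow> laplacian_at n A x i = 0"
    and "j \<in> C"
  shows "x j \<le> x d"
proof -
  have "finite C" using final_class_subset[OF C] finite_nat_iff_bounded by blast
  define M where "M = Max (x ` C)"
  have bound: "\<And>j. j \<in> C \<Longrightarrow> x j \<le> M" unfolding M_def using \<open>finite C\<close> by simp
  have "M \<in> x ` C" unfolding M_def using \<open>finite C\<close> \<open>d \<in> C\<close> by (intro Max_in) auto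
  then obtain i0 where "i0 \<in> C" "x i0 = M" by auto
  have "(arc n A)\<^sup>*\<^sup>* i0 d"
    using C \<open>i0 \<in> C\<close> \<open>d \<in> C\<close> unfolding final_class_def bicomponent_def reach_def
    by (auto intro: rtranclp_trans)
  have closed: "\<And>j m. j \<in> C \<Longrightarrow> arc n A j m \<Longrightarrow> m \<in> C"
    using C unfolding final_class_def by blast
  have "\<exists>e\<in>C \<inter> D. x e = M"
    using nonneg closed bound harmonic \<open>i0 \<in> C\<close> \<open>x i0 = M\<close> \<open>(arc n A)\<^sup>*\<^sup>* i0 d\<close> \<open>d \<in> D\<close>
    by (rule max_attained_at_representative)
  then obtain e where "e \<in> D \<inter> C" "x e = M" by blast
  moreover have "e = d"
    using final_class_representative_unique[OF reps C] \<open>e \<in> D \<inter> C\<close> \<open>d \<in> D\<close> \<open>d \<in> C\<close>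
    by blast
  ultimately have "x d = M" by simp
  then show ?thesis using bound \<open>j \<in> C\<close> by simp
qed

text \<open>No arc leaves the final class of \<open>d\<close>, and \<open>x\<close> is constant on it, being maximal and
  (applied to \<open>-x\<close>) minimal at \<open>d\<close>.\<close>
lemma laplacian_at_representative_eq_zero:
  assumes nonneg: "\<And>i j. i < n \<Longrightarrow> j < n \<Longrightarrow> A $$ (i, j) \<ge> 0"
    and reps: "final_class_representatives n A D" and "d \<in> D"
    and harmonic: "\<And>i. i < n \<Longrightarrow> i \<notin> D \<Longrightarrow> laplacian_at n A x i = 0"
  shows "laplacian_at n A x d = 0"
proof -
  obtain C where C: "final_class n A C" and "d \<in> C"
    using reps \<open>d \<in> D\<close> unfolding final_class_representatives_def by blast
  have "x j \<le> x d" if "j \<in> C" for j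
    by (rule max_of_final_class_at_representative[OF nonneg reps C \<open>d \<in> D\<close> \<open>d \<in> C\<close> harmonic that])
  moreover have "- x j \<le> - x d" if "j \<in> C" for j
    by (rule max_of_final_class_at_representative[OF nonneg reps C \<open>d \<in> D\<close> \<open>d \<in> C\<close> _ that])
       (use harmonic laplacian_at_uminus in auto)
  ultimately have const: "\<And>j. j \<in> C \<Longrightarrow> x j = x d" by force
  have "d < n" using final_class_subset[OF C] \<open>d \<in> C\<close> by auto
  show ?thesis unfolding laplacian_at_def
  proof (rule sum.neutral, rule ballI)
    fix j assume "j \<in> {..<n}"
    show "A $$ (d, j) * (x d - x j) = 0"
    proof (cases "arc n A d j")
      case True
      then have "j \<in> C" using C \<open>d \<in> C\<close> unfolding final_class_def by blast
      then show ?thesis using const by simp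
    next
      case False
      then show ?thesis using nonneg[of d j] \<open>d < n\<close> \<open>j \<in> {..<n}\<close> by (auto simp: arc_def)
    qed
  qed
qed

lemma inverse_of_injective_mat:
  fixes K :: "real mat"
  assumes K: "K \<in> carrier_mat n n"
    and inj: "\<And>v. v \<in> carrier_vec n \<Longrightarrow> K *\<^sub>v v = 0\<^sub>v n \<Longrightarrow> v = 0\<^sub>v n"
  obtains B where "B \<in> carrier_mat n n" "B * K = 1\<^sub>m n" "K * B = 1\<^sub>m n"
proof -
  have "det K \<noteq> 0" using det_0_iff_vec_prod_zero[OF K] inj by blast
  then have "K \<in> Units (ring_mat TYPE(real) n ())" by (rule det_non_zero_imp_unit[OF K])
  then show ?thesis using that unfolding Units_def ring_mat_def by auto
qed

lemma scalar_prod_self_eq_zero: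
  fixes v :: "real vec"
  assumes "v \<in> carrier_vec n" "v \<bullet> v = 0"
  shows "v = 0\<^sub>v n"
proof (rule eq_vecI)
  have "\<forall>i\<in>{0..<n}. v $ i * v $ i = 0"
    using assms by (subst sum_nonneg_eq_0_iff[symmetric]) (auto simp: scalar_prod_def)
  then show "\<And>i. i < dim_vec (0\<^sub>v n) \<Longrightarrow> v $ i = 0\<^sub>v n $ i" by simp
qed (use assms in simp)

lemma invertible_gram_mat:
  fixes U :: "real mat"
  assumes U: "U \<in> carrier_mat n m"
    and inj: "\<And>c. c \<in> carrier_vec m \<Longrightarrow> U *\<^sub>v c = 0\<^sub>v n \<Longrightarrow> c = 0\<^sub>v m"
  shows "invertible_mat (U\<^sup>T * U)"
proof -
  have G: "U\<^sup>T * U \<in> carrier_mat m m" using U by simp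
  have "c = 0\<^sub>v m" if c: "c \<in> carrier_vec m" and "(U\<^sup>T * U) *\<^sub>v c = 0\<^sub>v m" for c
  proof -
    have "(U\<^sup>T *\<^sub>v (U *\<^sub>v c)) \<bullet> c = (U *\<^sub>v c) \<bullet> (U *\<^sub>v c)"
      using U c by (intro transpose_vec_mult_scalar) auto
    moreover have "U\<^sup>T *\<^sub>v (U *\<^sub>v c) = 0\<^sub>v m" using U c that(2) by simp
    ultimately have "(U *\<^sub>v c) \<bullet> (U *\<^sub>v c) = 0" using c by simp
    then show ?thesis using inj c U scalar_prod_self_eq_zero by (metis mult_mat_vec_carrier)
  qed
  then obtain B where B: "B \<in> carrier_mat m m" "B * (U\<^sup>T * U) = 1\<^sub>m m" "(U\<^sup>T * U) * B = 1\<^sub>m m"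
    using inverse_of_injective_mat[OF G] by blast
  show ?thesis
    unfolding invertible_mat_def inverts_mat_def
    by (intro conjI exI[of _ B]) (use B G U in auto)
qed

lemma orth_proj_onto_column_space:
  fixes U :: "real mat"
  assumes U: "U \<in> carrier_mat n m" and M: "M \<in> carrier_mat m m"
    and inverse: "(U\<^sup>T * U) * M = 1\<^sub>m m"
  shows "orth_proj_onto n {U *\<^sub>v y | y. y \<in> carrier_vec m} (U * M * U\<^sup>T)"
  unfolding orth_proj_onto_def
proof (intro conjI ballI)
  show "U * M * U\<^sup>T \<in> carrier_mat n n" using U M by simp
next
  fix x :: "real vec" assume x: "x \<in> carrier_vec n"
  define y where "y = M *\<^sub>v (U\<^sup>T *\<^sub>v x)"
  have y: "y \<in> carrier_vec m" unfolding y_def using M U x by simp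
  have "(U * M * U\<^sup>T) *\<^sub>v x = (U * M) *\<^sub>v (U\<^sup>T *\<^sub>v x)"
    using U M x by (intro assoc_mult_mat_vec[of _ n m _ n]) auto
  also have "\<dots> = U *\<^sub>v y"
    unfolding y_def using U M x by (intro assoc_mult_mat_vec[of _ n m _ m]) auto
  finally have Px: "(U * M * U\<^sup>T) *\<^sub>v x = U *\<^sub>v y" .
  then show "(U * M * U\<^sup>T) *\<^sub>v x \<in> {U *\<^sub>v y | y. y \<in> carrier_vec m}" using y by blast
  define r where "r = x - U *\<^sub>v y"
  have r: "r \<in> carrier_vec n" unfolding r_def using x U y by simp
  have "U\<^sup>T *\<^sub>v (U *\<^sub>v y) = ((U\<^sup>T * U) * M) *\<^sub>v (U\<^sup>T *\<^sub>v x)"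
    unfolding y_def using U M x by (simp add: assoc_mult_mat_vec[of _ m n _ m])
  then have "U\<^sup>T *\<^sub>v (U *\<^sub>v y) = U\<^sup>T *\<^sub>v x" using inverse U x by simp
  then have Ur: "U\<^sup>T *\<^sub>v r = 0\<^sub>v m"
    unfolding r_def using U x y by (simp add: mult_minus_distrib_mat_vec[of _ m n])
  fix w assume "w \<in> {U *\<^sub>v y | y. y \<in> carrier_vec m}"
  then obtain v where v: "v \<in> carrier_vec m" and w: "w = U *\<^sub>v v" by blast
  have "r \<bullet> w = (U\<^sup>T *\<^sub>v r) \<bullet> v"
    unfolding w by (rule transpose_vec_mult_scalar[OF U v r, symmetric])
  then show "(x - (U * M * U\<^sup>T) *\<^sub>v x) \<bullet> w = 0" using Ur v Px r_def by simp
qed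

definition dirichlet_mat :: "nat \<Rightarrow> real mat \<Rightarrow> nat set \<Rightarrow> real mat" where
  "dirichlet_mat n A D =
     mat n n (\<lambda>(i, j). if i \<in> D then (if i = j then 1 else 0) else laplacian n A $$ (i, j))"

lemma dirichlet_mat_carrier: "dirichlet_mat n A D \<in> carrier_mat n n"
  unfolding dirichlet_mat_def by simp

lemma dirichlet_mat_mult_vec_nth:
  assumes w: "w \<in> carrier_vec n" and i: "i < n"
  shows "(dirichlet_mat n A D *\<^sub>v w) $ i = (if i \<in> D then w $ i else laplacian_at n A (\<lambda>j. w $ j) i)"
proof (cases "i \<in> D")
  case True
  have "(dirichlet_mat n A D *\<^sub>v w) $ i = (\<Sum>j\<in>{0..<n}. (if i = j then 1 else 0) * w $ j)"
    using True w i unfolding dirichlet_mat_def by (auto simp: scalar_prod_def intro!: sum.cong)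
  also have "\<dots> = (\<Sum>j\<in>{0..<n}. if i = j then w $ j else 0)" by (rule sum.cong) auto
  finally show ?thesis using True i by simp
next
  case False
  then have "(dirichlet_mat n A D *\<^sub>v w) $ i = (laplacian n A *\<^sub>v w) $ i"
    using w i unfolding dirichlet_mat_def laplacian_def by (auto simp: scalar_prod_def intro!: sum.cong)
  then show ?thesis using False laplacian_mult_vec_nth[OF w i] by simp
qed

lemma dirichlet_mat_injective:
  assumes nonneg: "\<And>i j. i < n \<Longrightarrow> j < n \<Longrightarrow> A $$ (i, j) \<ge> 0"
    and reps: "final_class_representatives n A D"
    and w: "w \<in> carrier_vec n" and Kw: "dirichlet_mat n A D *\<^sub>v w = 0\<^sub>v n"
  shows "w = 0\<^sub>v n"
proof (rule eq_vecI)
  have Kw_nth: "(dirichlet_mat n A D *\<^sub>v w) $ i = 0" if "i < n" for i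
    using Kw that by simp
  fix i assume "i < dim_vec (0\<^sub>v n :: real vec)"
  then have "i < n" by simp
  have "w $ i = 0"
  proof (rule dirichlet_eq_zero[OF nonneg reps, of "\<lambda>j. w $ j"])
    fix d assume "d \<in> D"
    then have "d < n" using final_class_representatives_subset[OF reps] by auto
    then show "w $ d = 0" using Kw_nth dirichlet_mat_mult_vec_nth[OF w] \<open>d \<in> D\<close> by fastforce
  next
    fix j assume "j < n" "j \<notin> D"
    then show "laplacian_at n A (\<lambda>j. w $ j) j = 0"
      using Kw_nth dirichlet_mat_mult_vec_nth[OF w] by fastforce
  qed (use \<open>i < n\<close> in auto)
  then show "w $ i = 0\<^sub>v n $ i" using \<open>i < n\<close> by simp
qed (use w in simp)

lemma laplacian_kernel_extension:
  assumes nonneg: "\<And>i j. i < n \<Longrightarrow> j < n \<Longrightarrow> A $$ (i, j) \<ge> 0"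
    and reps: "final_class_representatives n A D"
    and v: "v \<in> carrier_vec n"
  obtains z where "z \<in> carrier_vec n" "laplacian n A *\<^sub>v z = 0\<^sub>v n" "\<And>i. i \<in> D \<Longrightarrow> z $ i = v $ i"
proof -
  let ?K = "dirichlet_mat n A D"
  obtain B where B: "B \<in> carrier_mat n n" "?K * B = 1\<^sub>m n"
    using inverse_of_injective_mat[OF dirichlet_mat_carrier] dirichlet_mat_injective[OF nonneg reps]
    by blast
  define b where "b = vec n (\<lambda>i. if i \<in> D then v $ i else 0)"
  define z where "z = B *\<^sub>v b"
  have z: "z \<in> carrier_vec n" unfolding z_def b_def using B(1) by (intro mult_mat_vec_carrier) auto
  have "?K *\<^sub>v z = (?K * B) *\<^sub>v b"
    unfolding z_def b_def using dirichlet_mat_carrier[of n A D] B(1) by simp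
  also have "\<dots> = b" unfolding B(2) b_def by simp
  finally have Kz: "(?K *\<^sub>v z) $ i = (if i \<in> D then v $ i else 0)" if "i < n" for i
    using that unfolding b_def by simp
  have harmonic: "laplacian_at n A (\<lambda>j. z $ j) i = 0" if "i < n" "i \<notin> D" for i
    using Kz[OF that(1)] dirichlet_mat_mult_vec_nth[OF z that(1)] that(2) by simp
  have "laplacian_at n A (\<lambda>j. z $ j) i = 0" if "i < n" for i
  proof (cases "i \<in> D")
    case True
    show ?thesis using nonneg reps True harmonic by (rule laplacian_at_representative_eq_zero)
  qed (use harmonic that in simp)
  then have "laplacian n A *\<^sub>v z = 0\<^sub>v n"
    using laplacian_mult_vec_nth[OF z] by (intro eq_vecI) (auto simp: laplacian_def)
  moreover have "z $ i = v $ i" if "i \<in> D" for i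
  proof -
    have "i < n" using that final_class_representatives_subset[OF reps] by auto
    then show ?thesis using Kz[OF \<open>i < n\<close>] dirichlet_mat_mult_vec_nth[OF z \<open>i < n\<close>] that by simp
  qed
  ultimately show ?thesis using that z by blast
qed

lemma laplacian_range_vanishing_on_representatives:
  assumes nonneg: "\<And>i j. i < n \<Longrightarrow> j < n \<Longrightarrow> A $$ (i, j) \<ge> 0"
    and reps: "final_class_representatives n A D"
    and v: "v \<in> carrier_vec n"
  obtains v' where "v' \<in> carrier_vec n" "\<And>i. i \<in> D \<Longrightarrow> v' $ i = 0"
    "laplacian n A *\<^sub>v v' = laplacian n A *\<^sub>v v"
proof -
  obtain z where z: "z \<in> carrier_vec n" "laplacian n A *\<^sub>v z = 0\<^sub>v n" "\<And>i. i \<in> D \<Longrightarrow> z $ i = v $ i"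
    using laplacian_kernel_extension[OF nonneg reps v] by blast
  have "laplacian n A *\<^sub>v (v - z) = laplacian n A *\<^sub>v v"
    using z v mult_mat_vec_carrier[OF laplacian_carrier v] by (simp add: mult_minus_distrib_mat_vec[of _ n n])
  moreover have "(v - z) $ i = 0" if "i \<in> D" for i
    using z(3)[OF that] that final_class_representatives_subset[OF reps] z(1) by auto
  ultimately show ?thesis using v z(1) by (intro that[of "v - z"]) auto
qed

definition scatter_vec :: "nat \<Rightarrow> nat list \<Rightarrow> real vec \<Rightarrow> real vec" where
  "scatter_vec n ks y = vec n (\<lambda>i. \<Sum>j<length ks. if ks ! j = i then y $ j else 0)"

lemma scatter_vec_nth_mem:
  assumes "distinct ks" "j < length ks" "ks ! j < n"
  shows "scatter_vec n ks y $ (ks ! j) = y $ j"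
proof -
  have "(\<Sum>l<length ks. if ks ! l = ks ! j then y $ l else 0) = (\<Sum>l<length ks. if l = j then y $ l else 0)"
    using assms by (intro sum.cong) (auto simp: nth_eq_iff_index_eq)
  then show ?thesis using assms unfolding scatter_vec_def by simp
qed

lemma scatter_vec_nth_not_mem:
  assumes "i < n" "i \<notin> set ks"
  shows "scatter_vec n ks y $ i = 0"
  using assms unfolding scatter_vec_def by (auto intro!: sum.neutral)

lemma scatter_vec_restrict:
  assumes "distinct ks" "set ks \<subseteq> {..<n}" "v \<in> carrier_vec n"
    and "\<And>i. i < n \<Longrightarrow> i \<notin> set ks \<Longrightarrow> v $ i = 0"
  shows "scatter_vec n ks (vec (length ks) (\<lambda>j. v $ (ks ! j))) = v"
proof (rule eq_vecI)
  fix i assume "i < dim_vec v"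
  then have "i < n" using assms(3) by simp
  show "scatter_vec n ks (vec (length ks) (\<lambda>j. v $ (ks ! j))) $ i = v $ i"
  proof (cases "i \<in> set ks")
    case True
    then obtain j where "j < length ks" "i = ks ! j" by (metis in_set_conv_nth)
    then show ?thesis using assms(1) \<open>i < n\<close> scatter_vec_nth_mem by simp
  next
    case False
    then show ?thesis using assms(4) \<open>i < n\<close> scatter_vec_nth_not_mem by simp
  qed
qed (use assms(3) in \<open>simp add: scatter_vec_def\<close>)

lemma U_mat_carrier: "U_mat n A D \<in> carrier_mat n (Suc (length (sorted_list_of_set ({0..<n} - D))))"
  unfolding U_mat_def Let_def by simp

lemma U_mat_mult_vec:
  fixes n :: nat and D :: "nat set"
  defines "ks \<equiv> sorted_list_of_set ({0..<n} - D)"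
  assumes y: "y \<in> carrier_vec (Suc (length ks))"
  shows "U_mat n A D *\<^sub>v y =
    laplacian n A *\<^sub>v scatter_vec n ks (vec (length ks) (\<lambda>j. y $ Suc j)) + y $ 0 \<cdot>\<^sub>v ones_vec n"
    (is "_ = ?L *\<^sub>v ?x + _")
proof (rule eq_vecI)
  fix r assume "r < dim_vec (?L *\<^sub>v ?x + y $ 0 \<cdot>\<^sub>v ones_vec n)"
  then have r: "r < n" by (simp add: ones_vec_def)
  have ks: "ks ! j < n" if "j < length ks" for j
    using nth_mem[OF that] unfolding ks_def by auto
  have "(U_mat n A D *\<^sub>v y) $ r
      = (\<Sum>c<Suc (length ks). (if c = 0 then 1 else ?L $$ (r, ks ! (c - 1))) * y $ c)"
    using r y unfolding U_mat_def Let_def ks_def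
    by (auto simp: scalar_prod_def lessThan_atLeast0 intro!: sum.cong)
  also have "\<dots> = y $ 0 + (\<Sum>j<length ks. ?L $$ (r, ks ! j) * y $ Suc j)"
    by (subst sum.lessThan_Suc_shift) simp
  finally have U_nth: "(U_mat n A D *\<^sub>v y) $ r = \<dots>" .
  have "(?L *\<^sub>v ?x) $ r
      = (\<Sum>i<n. ?L $$ (r, i) * (\<Sum>j<length ks. if ks ! j = i then y $ Suc j else 0))"
    using r unfolding laplacian_def scatter_vec_def
    by (auto simp: scalar_prod_def lessThan_atLeast0 intro!: sum.cong)
  also have "\<dots> = (\<Sum>j<length ks. \<Sum>i<n. if ks ! j = i then ?L $$ (r, i) * y $ Suc j else 0)"
    unfolding sum_distrib_left by (subst sum.swap) (auto intro!: sum.cong)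
  also have "\<dots> = (\<Sum>j<length ks. ?L $$ (r, ks ! j) * y $ Suc j)"
    using ks by (auto intro!: sum.cong simp: sum.delta)
  finally show "(U_mat n A D *\<^sub>v y) $ r = (?L *\<^sub>v ?x + y $ 0 \<cdot>\<^sub>v ones_vec n) $ r"
    using U_nth r by (simp add: ones_vec_def)
qed (simp add: U_mat_def Let_def ones_vec_def)

lemma U_mat_injective:
  assumes nonneg: "\<And>i j. i < n \<Longrightarrow> j < n \<Longrightarrow> A $$ (i, j) \<ge> 0"
    and "n > 0" and reps: "final_class_representatives n A D"
    and c: "c \<in> carrier_vec (dim_col (U_mat n A D))" and Uc: "U_mat n A D *\<^sub>v c = 0\<^sub>v n"
  shows "c = 0\<^sub>v (dim_col (U_mat n A D))"
proof -
  define ks where "ks = sorted_list_of_set ({0..<n} - D)"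
  define m where "m = length ks"
  have ks: "distinct ks" "set ks = {0..<n} - D" unfolding ks_def by auto
  have dim: "dim_col (U_mat n A D) = Suc m" unfolding m_def ks_def U_mat_def Let_def by simp
  define x where "x = scatter_vec n ks (vec m (\<lambda>j. c $ Suc j))"
  have x: "x \<in> carrier_vec n" unfolding x_def scatter_vec_def by simp
  have Lx: "laplacian n A *\<^sub>v x + c $ 0 \<cdot>\<^sub>v ones_vec n = 0\<^sub>v n"
    using U_mat_mult_vec[of c n D A] c Uc unfolding x_def ks_def m_def dim by simp
  have const: "laplacian_at n A (\<lambda>j. x $ j) i = - c $ 0" if "i < n" for i
  proof -
    have "(laplacian n A *\<^sub>v x + c $ 0 \<cdot>\<^sub>v ones_vec n) $ i = 0" using Lx that by simp
    then have "(laplacian n A *\<^sub>v x) $ i + c $ 0 = 0" using that by (simp add: ones_vec_def)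
    then show ?thesis using laplacian_mult_vec_nth[OF x that] by simp
  qed
  have "c $ 0 = 0" using laplacian_at_const_eq_zero[OF nonneg \<open>n > 0\<close> const] by simp
  have x_zero: "x $ i = 0" if "i < n" for i
    by (rule dirichlet_eq_zero[OF nonneg reps, of "\<lambda>j. x $ j"])
       (use const \<open>c $ 0 = 0\<close> final_class_representatives_subset[OF reps] ks
         scatter_vec_nth_not_mem that in \<open>auto simp: x_def\<close>)
  have "c $ Suc j = 0" if "j < m" for j
  proof -
    have "ks ! j < n" using nth_mem[of j ks] that ks(2) unfolding m_def by auto
    moreover have "x $ (ks ! j) = c $ Suc j"
      using scatter_vec_nth_mem[OF ks(1), of j n] that \<open>ks ! j < n\<close> unfolding x_def m_def by simp
    ultimately show ?thesis using x_zero by simp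
  qed
  then show ?thesis
    using \<open>c $ 0 = 0\<close> c unfolding dim by (intro eq_vecI) (auto simp: less_Suc_eq_0_disj)
qed

lemma range_plus_ones_eq_column_space:
  assumes nonneg: "\<And>i j. i < n \<Longrightarrow> j < n \<Longrightarrow> A $$ (i, j) \<ge> 0"
    and reps: "final_class_representatives n A D"
  shows "range_plus_ones n A = {U_mat n A D *\<^sub>v y | y. y \<in> carrier_vec (dim_col (U_mat n A D))}"
proof -
  define ks where "ks = sorted_list_of_set ({0..<n} - D)"
  have ks: "distinct ks" "set ks = {0..<n} - D" unfolding ks_def by auto
  have dim: "dim_col (U_mat n A D) = Suc (length ks)" unfolding ks_def U_mat_def Let_def by simp
  show ?thesis
  proof (intro equalityI subsetI)
    fix w assume "w \<in> range_plus_ones n A"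
    then obtain v c where v: "v \<in> carrier_vec n" and w: "w = laplacian n A *\<^sub>v v + c \<cdot>\<^sub>v ones_vec n"
      unfolding range_plus_ones_def by blast
    obtain v' where v': "v' \<in> carrier_vec n" "\<And>i. i \<in> D \<Longrightarrow> v' $ i = 0"
      "laplacian n A *\<^sub>v v' = laplacian n A *\<^sub>v v"
      using laplacian_range_vanishing_on_representatives[OF nonneg reps v] by blast
    define y where "y = vec (Suc (length ks)) (\<lambda>j. if j = 0 then c else v' $ (ks ! (j - 1)))"
    have "vec (length ks) (\<lambda>j. y $ Suc j) = vec (length ks) (\<lambda>j. v' $ (ks ! j))"
      unfolding y_def by auto
    moreover have "scatter_vec n ks (vec (length ks) (\<lambda>j. v' $ (ks ! j))) = v'"
      using ks v' by (intro scatter_vec_restrict) auto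
    ultimately have "U_mat n A D *\<^sub>v y = w"
      using U_mat_mult_vec[of y n D A] v' w unfolding ks_def y_def by simp
    then show "w \<in> {U_mat n A D *\<^sub>v y | y. y \<in> carrier_vec (dim_col (U_mat n A D))}"
      unfolding dim by (intro CollectI exI[of _ y]) (auto simp: y_def)
  next
    fix w assume "w \<in> {U_mat n A D *\<^sub>v y | y. y \<in> carrier_vec (dim_col (U_mat n A D))}"
    then obtain y where "y \<in> carrier_vec (Suc (length ks))" "w = U_mat n A D *\<^sub>v y"
      unfolding dim by blast
    then show "w \<in> range_plus_ones n A"
      using U_mat_mult_vec[of y n D A] unfolding range_plus_ones_def ks_def
      by (auto simp: scatter_vec_def)
  qed
qed

theorem proposition1:
  fixes n :: nat and A :: "real mat" and D :: "nat set"
  assumes "n > 0"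
    and "A \<in> carrier_mat n n"
    and "\<And>i j. i < n \<Longrightarrow> j < n \<Longrightarrow> A $$ (i, j) \<ge> 0"
    and "final_class_representatives n A D"
  shows "invertible_mat ((U_mat n A D)\<^sup>T * U_mat n A D) \<and>
    (\<forall>M. M \<in> carrier_mat (dim_col (U_mat n A D)) (dim_col (U_mat n A D)) \<and>
         M * ((U_mat n A D)\<^sup>T * U_mat n A D) = 1\<^sub>m (dim_col (U_mat n A D)) \<and>
         ((U_mat n A D)\<^sup>T * U_mat n A D) * M = 1\<^sub>m (dim_col (U_mat n A D)) \<longrightarrow>
       orth_proj_onto n (range_plus_ones n A) (U_mat n A D * M * (U_mat n A D)\<^sup>T))"
proof -
  let ?U = "U_mat n A D"
  have U: "?U \<in> carrier_mat n (dim_col ?U)" using U_mat_carrier by (metis carrier_matD(2))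
  have "invertible_mat (?U\<^sup>T * ?U)"
    using U_mat_injective[OF assms(3,1,4)] by (rule invertible_gram_mat[OF U])
  moreover have "orth_proj_onto n (range_plus_ones n A) (?U * M * ?U\<^sup>T)"
    if "M \<in> carrier_mat (dim_col ?U) (dim_col ?U)" "(?U\<^sup>T * ?U) * M = 1\<^sub>m (dim_col ?U)" for M
    using orth_proj_onto_column_space[OF U that] range_plus_ones_eq_column_space[OF assms(3,4)]
    by simp
  ultimately show ?thesis by blast
qed

end
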